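(* Consider the Krasovskii-regularized Lur'e system $\dot x\in F(x)$ of the context. Suppose Assumption 1 holds, that $\lim_{s\to0^+}\psi_i(s)>0$ and $\lim_{s\to0^-}\psi_i(s)<0$ for each $i$, and that $\overline\Gamma=\mathrm{diag}(\overline\gamma_1,\dots,\overline\gamma_p)$ with $\overline\gamma_i>0$ satisfies $\overline\Gamma CB+(CB)^\top\overline\Gamma>0$. Let $\nu,c>0$ be constants such that $|u|\ge c$ for all $u\in-\boldsymbol\Psi(y)$ and all $y$ with $0<|y|\le\nu$. Let $\lambda_1>0$ be the smallest eigenvalue of $\overline\Gamma CB+(CB)^\top\overline\Gamma$ and $\lambda_2:=|\overline\Gamma CA|$ (spectral norm). Define $\widetilde W(x):=W(Cx):=2\sum_{i=1}^p\overline\gamma_i\int_0^{C_ix}\psi_i(\sigma)\,d\sigma$. Then there exist $\mu\in(0,\nu]$ with $\omega:=\lambda_1\big(c-2\mu\lambda_2/\lambda_1\big)>0$, and $\alpha_4,\alpha_5\in\mathcal{K}_\infty$, such that $\alpha_4(|Cx|)\le W(Cx)\le\alpha_5(|Cx|)$ for all $x$ with $|x|\le\mu$, and $\sup\dot{\overline{\widetilde W}}_F(x)\le-c\,\omega$ for all $x$ with $|x|\le\mu$ and $Cx\neq0$ (with $\sup\emptyset=-\infty$).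
   Context: System: $\dot x=Ax+Bu$, $y=Cx$, $u=-\boldsymbol\psi(y)$, $x\in\mathbb{R}^n$, $u,y\in\mathbb{R}^p$, $\boldsymbol\psi(y)=(\psi_1(y_1),\dots,\psi_p(y_p))$; $C_i$ is the $i$-th row of $C$. Piecewise continuous: finitely many discontinuities on each bounded interval, continuous between them, finite one-sided limits. Krasovskii regularization: $\boldsymbol\Psi_i(s):=\bigcap_{\delta>0}\overline{\mathrm{co}}\,\psi_i(s+\delta[-1,1])$, $\boldsymbol\Psi(y):=\boldsymbol\Psi_1(y_1)\times\dots\times\boldsymbol\Psi_p(y_p)$, $F(x):=\{Ax-Bw:w\in\boldsymbol\Psi(Cx)\}$. Assumption 1: for each $i$, $\psi_i$ is piecewise continuous and there is $\zeta_i\in(0,+\infty]$ with $\psi_i(s)(\psi_i(s)-\zeta_is)\le0$ for all $s$ (for $\zeta_i=+\infty$: $\psi_i(s)s\ge0$). The generalized gradient of $\widetilde W$ is $\partial\widetilde W(x)=\{2C^\top\overline\Gamma w:w\in\boldsymbol\Psi(Cx)\}$, and the set-valued Lie derivative is $\dot{\overline{\widetilde W}}_F(x):=\{a\in\mathbb{R}:\exists f\in F(x),\ \langle v,f\rangle=a\ \forall v\in\partial\widetilde W(x)\}$. $\mathcal{K}_\infty$: continuous strictly increasing unbounded functions $\mathbb{R}_{\ge0}\to\mathbb{R}_{\ge0}$ vanishing at $0$. *)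

theory Defs
  imports "HOL-Analysis.Analysis"
begin

definition piecewise_cont :: "(real \<Rightarrow> real) \<Rightarrow> bool" where
  "piecewise_cont f \<longleftrightarrow>
     (\<forall>a b. finite {s \<in> {a..b}. \<not> isCont f s}) \<and>
     (\<forall>s. \<exists>l. (f \<longlongrightarrow> l) (at_left s)) \<and>
     (\<forall>s. \<exists>r. (f \<longlongrightarrow> r) (at_right s))"

definition kras :: "(real \<Rightarrow> real) \<Rightarrow> real \<Rightarrow> real set" where
  "kras f s = (\<Inter>\<delta>\<in>{0<..}. closure (convex hull (f ` {s - \<delta>..s + \<delta>})))"

definition Kras_vec :: "('p \<Rightarrow> real \<Rightarrow> real) \<Rightarrow> real^'p \<Rightarrow> (real^'p) set" where
  "Kras_vec \<psi> y = {w. \<forall>i. w $ i \<in> kras (\<psi> i) (y $ i)}"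

definition F_kras :: "real^'n^'n \<Rightarrow> real^'p^'n \<Rightarrow> real^'n^'p \<Rightarrow> ('p \<Rightarrow> real \<Rightarrow> real)
    \<Rightarrow> real^'n \<Rightarrow> (real^'n) set" where
  "F_kras A B C \<psi> x = {A *v x - B *v w | w. w \<in> Kras_vec \<psi> (C *v x)}"

definition sint :: "(real \<Rightarrow> real) \<Rightarrow> real \<Rightarrow> real" where
  "sint f t = (if 0 \<le> t then integral {0..t} f else - integral {t..0} f)"

definition W_fun :: "('p::finite \<Rightarrow> real) \<Rightarrow> ('p \<Rightarrow> real \<Rightarrow> real) \<Rightarrow> real^'p \<Rightarrow> real" where
  "W_fun \<gamma> \<psi> y = 2 * (\<Sum>i\<in>UNIV. \<gamma> i * sint (\<psi> i) (y $ i))"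

definition diag_mat :: "('p::finite \<Rightarrow> real) \<Rightarrow> real^'p^'p" where
  "diag_mat \<gamma> = (\<chi> i j. if i = j then \<gamma> i else 0)"

definition gen_grad :: "real^'n^'p \<Rightarrow> ('p::finite \<Rightarrow> real) \<Rightarrow> ('p \<Rightarrow> real \<Rightarrow> real)
    \<Rightarrow> real^'n \<Rightarrow> (real^'n) set" where
  "gen_grad C \<gamma> \<psi> x = {2 *\<^sub>R (transpose C *v (diag_mat \<gamma> *v w)) | w. w \<in> Kras_vec \<psi> (C *v x)}"

definition set_lie :: "(real^'n) set \<Rightarrow> (real^'n) set \<Rightarrow> real set" where
  "set_lie G Fx = {a. \<exists>f\<in>Fx. \<forall>v\<in>G. v \<bullet> f = a}"

definition pos_def :: "real^'p^'p \<Rightarrow> bool" where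
  "pos_def M \<longleftrightarrow> (\<forall>v. v \<noteq> 0 \<longrightarrow> v \<bullet> (M *v v) > 0)"

definition min_eig :: "real^'p^'p \<Rightarrow> real" where
  "min_eig M = Min {l. \<exists>v. v \<noteq> 0 \<and> M *v v = l *\<^sub>R v}"

definition spec_norm :: "real^'n^'p \<Rightarrow> real" where
  "spec_norm M = onorm (\<lambda>x. M *v x)"

definition class_K_inf :: "(real \<Rightarrow> real) \<Rightarrow> bool" where
  "class_K_inf \<alpha> \<longleftrightarrow> continuous_on {0..} \<alpha> \<and> strict_mono_on {0..} \<alpha> \<and> \<alpha> 0 = 0 \<and>
     filterlim \<alpha> at_top at_top"

end

theory Submission
  imports Defs
begin

text \<open>Near \<open>0\<close> each \<open>\<psi>\<^sub>i\<close> is continuous off \<open>0\<close> and has one-sided limits of opposite signs, so its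
  primitive grows like \<open>|s|\<close>; hence \<open>W\<close> is squeezed between two linear functions of \<open>|y|\<close> near
  the origin. Every element of the Lie derivative equals
  \<open>2 w\<^sup>T \<Gamma> C A x - w\<^sup>T (\<Gamma> C B + (C B)\<^sup>T \<Gamma>) w\<close> for some \<open>w \<in> \<Psi>(C x)\<close>; the quadratic term is at least
  \<open>\<lambda>\<^sub>1 |w|\<^sup>2\<close> and the other at most \<open>2 \<lambda>\<^sub>2 \<mu> |w|\<close>, so \<open>|w| \<ge> c\<close> gives the bound
  \<open>-c (\<lambda>\<^sub>1 c - 2 \<mu> \<lambda>\<^sub>2)\<close>. The radius \<open>\<mu>\<close> is taken so small that \<open>C x\<close> stays where both estimates
  hold.\<close>

lemma inner_matrix_vector_transpose: "(u::real^'n) \<bullet> (M *v v) = (transpose M *v u) \<bullet> v"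
  by (metis dot_lmul_matrix vector_transpose_matrix transpose_transpose)

lemma quadratic_form_attains_min_on_sphere:
  fixes M :: "real^'n^'n"
  obtains v where "norm v = 1" "\<And>u. (v \<bullet> (M *v v)) * (u \<bullet> u) \<le> u \<bullet> (M *v u)"
proof -
  define q where "q u = u \<bullet> (M *v u)" for u :: "real^'n"
  have "continuous_on (sphere 0 1) q"
    unfolding q_def by (intro continuous_intros linear_continuous_on matrix_vector_mul_bounded_linear)
  moreover obtain e :: "real^'n" where "norm e = 1"
    using vector_choose_size[of 1] by auto
  then have "sphere (0::real^'n) 1 \<noteq> {}" by auto
  ultimately obtain v where v: "norm v = 1" and min: "\<And>u. norm u = 1 \<Longrightarrow> q v \<le> q u"
    using continuous_attains_inf[OF compact_sphere] by (metis mem_sphere_0)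
  have "q v * (u \<bullet> u) \<le> q u" for u
  proof (cases "u = 0")
    case False
    have "q v \<le> q ((1 / norm u) *\<^sub>R u)" using False by (intro min) simp
    also have "\<dots> = q u / (norm u)\<^sup>2"
      by (simp add: q_def matrix_vector_mult_scaleR power2_eq_square)
    finally show ?thesis using False by (simp add: le_divide_eq power2_norm_eq_inner)
  qed (simp add: q_def)
  with v that show thesis by (simp add: q_def)
qed

text \<open>The form \<open>h u = u\<^sup>T (M - l I) u\<close> is nonnegative and vanishes at \<open>v\<close>; for symmetric \<open>M\<close>,
  moving \<open>v\<close> a little along \<open>z = M v - l v\<close> would make \<open>h\<close> negative unless \<open>z = 0\<close>.\<close>
lemma symmetric_quadratic_form_min_imp_eigenvector:
  fixes M :: "real^'n^'n"
  assumes sym: "transpose M = M"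
    and ge: "\<And>u. l * (u \<bullet> u) \<le> u \<bullet> (M *v u)" and eq: "v \<bullet> (M *v v) = l * (v \<bullet> v)"
  shows "M *v v = l *\<^sub>R v"
proof (rule ccontr)
  define z where "z = M *v v - l *\<^sub>R v"
  define h where "h u = u \<bullet> (M *v u) - l * (u \<bullet> u)" for u
  assume "M *v v \<noteq> l *\<^sub>R v"
  then have zpos: "z \<bullet> z > 0" by (simp add: z_def)
  have expand: "h (v - t *\<^sub>R z) = - 2 * t * (z \<bullet> z) + t\<^sup>2 * h z" for t
  proof -
    have "v \<bullet> (M *v z) = z \<bullet> (M *v v)"
      using inner_matrix_vector_transpose[of v M z] sym by (simp add: inner_commute)
    moreover have "z \<bullet> (M *v v) - l * (z \<bullet> v) = z \<bullet> z"
      by (simp add: z_def inner_diff_right)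
    ultimately show ?thesis using eq
      by (simp add: h_def matrix_vector_mult_diff_distrib matrix_vector_mult_scaleR inner_diff_left
          inner_diff_right algebra_simps power2_eq_square inner_commute[of z v])
  qed
  define t where "t = (if h z \<le> 0 then 1 else (z \<bullet> z) / h z)"
  have "0 \<le> h (v - t *\<^sub>R z)" using ge[of "v - t *\<^sub>R z"] by (simp add: h_def)
  also have "\<dots> < 0"
  proof (cases "h z \<le> 0")
    case True
    then have "h (v - t *\<^sub>R z) = h z - 2 * (z \<bullet> z)" using expand[of 1] by (simp add: t_def)
    with True zpos show ?thesis by linarith
  next
    case False
    then have "- 2 * t * (z \<bullet> z) + t\<^sup>2 * h z = - (z \<bullet> z)\<^sup>2 / h z"
      by (simp add: t_def power2_eq_square field_simps)
    then show ?thesis using False zpos by (simp add: expand)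
  qed
  finally show False by simp
qed

lemma finite_eigenvalues_symmetric:
  fixes M :: "real^'n^'n"
  assumes sym: "transpose M = M"
  shows "finite {l. \<exists>v. v \<noteq> 0 \<and> M *v v = l *\<^sub>R v}"
proof -
  define E where "E = {l. \<exists>v. v \<noteq> 0 \<and> M *v v = l *\<^sub>R v}"
  define ev where "ev l = (SOME v. v \<noteq> 0 \<and> M *v v = l *\<^sub>R v)" for l
  have ev: "ev l \<noteq> 0 \<and> M *v ev l = l *\<^sub>R ev l" if "l \<in> E" for l
  proof -
    have "\<exists>v. v \<noteq> 0 \<and> M *v v = l *\<^sub>R v" using that unfolding E_def by auto
    then show ?thesis unfolding ev_def by (rule someI_ex)
  qed
  have inj: "inj_on ev E"
  proof (rule inj_onI)
    fix a b assume "a \<in> E" "b \<in> E" "ev a = ev b"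
    then have "a *\<^sub>R ev a = b *\<^sub>R ev a" "ev a \<noteq> 0" using ev by metis+
    then show "a = b" by simp
  qed
  have "pairwise orthogonal (ev ` E)"
  proof (clarsimp simp: pairwise_def)
    fix a b assume ab: "a \<in> E" "b \<in> E" "ev a \<noteq> ev b"
    have "a * (ev a \<bullet> ev b) = ev a \<bullet> (M *v ev b)"
      using ev[OF ab(1)] inner_matrix_vector_transpose[of "ev a" M "ev b"] sym by simp
    also have "\<dots> = b * (ev a \<bullet> ev b)" using ev[OF ab(2)] by simp
    finally show "orthogonal (ev a) (ev b)" using ab(3) by (auto simp: orthogonal_def)
  qed
  moreover have "0 \<notin> ev ` E" using ev by auto
  ultimately have "finite (ev ` E)"
    using independent_bound pairwise_orthogonal_independent by blast
  then show ?thesis using inj finite_imageD unfolding E_def by blast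
qed

lemma min_eig_symmetric:
  fixes M :: "real^'n^'n"
  assumes sym: "transpose M = M"
  shows "\<exists>v. v \<noteq> 0 \<and> M *v v = min_eig M *\<^sub>R v" and "min_eig M * (w \<bullet> w) \<le> w \<bullet> (M *v w)"
proof -
  obtain v where v: "norm v = 1" and ge: "\<And>u. (v \<bullet> (M *v v)) * (u \<bullet> u) \<le> u \<bullet> (M *v u)"
    using quadratic_form_attains_min_on_sphere[of M] by blast
  define l where "l = v \<bullet> (M *v v)"
  have ge_l: "l * (u \<bullet> u) \<le> u \<bullet> (M *v u)" for u
    unfolding l_def by (rule ge)
  have "v \<noteq> 0" "v \<bullet> v = 1" using v by (auto simp: power2_norm_eq_inner[symmetric])
  then have eigv: "M *v v = l *\<^sub>R v"
    by (intro symmetric_quadratic_form_min_imp_eigenvector[OF sym ge_l]) (simp add: l_def)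
  have "min_eig M = l" unfolding min_eig_def
  proof (rule Min_eqI[OF finite_eigenvalues_symmetric[OF sym]])
    show "l \<in> {l. \<exists>v. v \<noteq> 0 \<and> M *v v = l *\<^sub>R v}" using eigv \<open>v \<noteq> 0\<close> by blast
  next
    fix l' assume "l' \<in> {l. \<exists>v. v \<noteq> 0 \<and> M *v v = l *\<^sub>R v}"
    then obtain u where "u \<noteq> 0" "M *v u = l' *\<^sub>R u" by blast
    then show "l \<le> l'" using ge_l[of u] by simp
  qed
  then show "\<exists>v. v \<noteq> 0 \<and> M *v v = min_eig M *\<^sub>R v" and "min_eig M * (w \<bullet> w) \<le> w \<bullet> (M *v w)"
    using eigv \<open>v \<noteq> 0\<close> ge_l[of w] by auto
qed

lemma min_eig_pos:
  fixes M :: "real^'n^'n"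
  assumes "transpose M = M" and "pos_def M"
  shows "min_eig M > 0"
proof -
  obtain v where v: "v \<noteq> 0" "M *v v = min_eig M *\<^sub>R v"
    using min_eig_symmetric(1)[OF assms(1)] by blast
  have "0 < v \<bullet> (M *v v)" using assms(2) v(1) by (simp add: pos_def_def)
  also have "\<dots> = min_eig M * (v \<bullet> v)" using v(2) by simp
  finally show ?thesis using v(1) inner_ge_zero[of v] by (auto simp: zero_less_mult_iff)
qed

lemma transpose_add: "transpose (X + Y) = transpose X + transpose (Y :: 'a::semiring_1^'n^'m)"
  by (simp add: transpose_def vec_eq_iff)

lemma transpose_diag_mat [simp]: "transpose (diag_mat \<gamma>) = diag_mat \<gamma>"
  by (simp add: transpose_def diag_mat_def vec_eq_iff)

lemma symmetric_diag_mat_mult_plus_transpose: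
  "transpose (diag_mat \<gamma> ** X + transpose X ** diag_mat \<gamma>) = diag_mat \<gamma> ** X + transpose X ** diag_mat \<gamma>"
  by (simp add: transpose_add matrix_transpose_mul add.commute)

lemma continuous_on_Icc_right_limit_extension:
  fixes f :: "real \<Rightarrow> real"
  assumes "a < b" and cont: "\<forall>s\<in>{a<..b}. isCont f s" and lim: "(f \<longlongrightarrow> l) (at_right a)"
  shows "continuous_on {a..b} (\<lambda>s. if s = a then l else f s)" (is "continuous_on _ ?g")
proof (clarsimp simp: continuous_on_eq_continuous_within)
  fix x assume x: "a \<le> x" "x \<le> b"
  show "continuous (at x within {a..b}) ?g"
  proof (cases "x = a")
    case True
    have "\<forall>\<^sub>F s in at_right a. f s = ?g s"
      using eventually_at_right_less[of a] by eventually_elim auto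
    then have "(?g \<longlongrightarrow> l) (at_right a)" by (rule tendsto_cong[THEN iffD1, OF _ lim])
    then show ?thesis unfolding continuous_within True at_within_Icc_at_right[OF \<open>a < b\<close>] by simp
  next
    case False
    have "\<forall>\<^sub>F s in nhds x. s \<in> {a<..}" using False x by (intro eventually_nhds_in_open) auto
    then have eq: "\<forall>\<^sub>F s in nhds x. f s = ?g s" by eventually_elim auto
    have "isCont f x" using cont False x by auto
    then have "isCont ?g x" using isCont_cong[OF eq] by simp
    then show ?thesis by (rule continuous_at_imp_continuous_within)
  qed
qed

lemma integral_bounds_right_limit:
  fixes f :: "real \<Rightarrow> real"
  assumes ab: "a < b" and cont: "\<forall>s\<in>{a<..b}. isCont f s" and lim: "(f \<longlongrightarrow> l) (at_right a)"
    and bnd: "\<forall>s\<in>{a<..b}. m \<le> f s \<and> f s \<le> M"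
  shows "m * (b - a) \<le> integral {a..b} f \<and> integral {a..b} f \<le> M * (b - a)"
proof -
  define g where "g s = (if s = a then l else f s)" for s
  have int: "g integrable_on {a..b}"
    using continuous_on_Icc_right_limit_extension[OF ab cont lim]
    by (simp add: g_def integrable_continuous_interval)
  have "\<forall>\<^sub>F s in at_right a. m \<le> f s \<and> f s \<le> M"
    using bnd ab by (auto simp: eventually_at_right_field intro!: exI[of _ b])
  then have "m \<le> l \<and> l \<le> M"
    using tendsto_lowerbound[OF lim] tendsto_upperbound[OF lim] eventually_mono by force
  then have g_bnd: "m \<le> g s \<and> g s \<le> M" if "s \<in> {a..b}" for s
    using that bnd by (auto simp: g_def)
  have "integral {a..b} f = integral {a..b} g"
    by (rule integral_spike[of "{a}"]) (auto simp: g_def)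
  moreover have "integral {a..b} (\<lambda>_. m) \<le> integral {a..b} g"
    by (rule integral_le) (use int g_bnd in auto)
  moreover have "integral {a..b} g \<le> integral {a..b} (\<lambda>_. M)"
    by (rule integral_le) (use int g_bnd in auto)
  ultimately show ?thesis using ab by (simp add: mult.commute)
qed

lemma sint_bounds_right_of_0:
  fixes f :: "real \<Rightarrow> real"
  assumes "d > 0" and cont: "\<forall>s\<in>{0<..<d}. isCont f s" and lim: "(f \<longlongrightarrow> l) (at_right 0)" and "l > 0"
  shows "\<exists>e>0. \<forall>t. 0 \<le> t \<and> t < e \<longrightarrow> l / 2 * t \<le> sint f t \<and> sint f t \<le> 2 * l * t"
proof -
  have "\<forall>\<^sub>F s in at_right 0. l / 2 < f s \<and> f s < 2 * l"
    using order_tendstoD(1)[OF lim, of "l / 2"] order_tendstoD(2)[OF lim, of "2 * l"] \<open>l > 0\<close>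
    by (auto elim: eventually_elim2)
  then obtain e0 where "e0 > 0" and e0: "\<And>s. 0 < s \<Longrightarrow> s < e0 \<Longrightarrow> l / 2 < f s \<and> f s < 2 * l"
    by (auto simp: eventually_at_right_field)
  define e where "e = min d e0"
  have "l / 2 * t \<le> sint f t \<and> sint f t \<le> 2 * l * t" if "0 \<le> t" "t < e" for t
  proof (cases "t = 0")
    case False
    then have "l / 2 * (t - 0) \<le> integral {0..t} f \<and> integral {0..t} f \<le> 2 * l * (t - 0)"
      using that cont e0 by (intro integral_bounds_right_limit[OF _ _ lim]) (auto simp: e_def less_imp_le)
    then show ?thesis using that by (simp add: sint_def)
  qed (simp add: sint_def)
  then show ?thesis using \<open>d > 0\<close> \<open>e0 > 0\<close> by (intro exI[of _ e]) (auto simp: e_def)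
qed

lemma sint_reflect: "sint f t = sint (\<lambda>s. - f (- s)) (- t)"
  using Henstock_Kurzweil_Integration.integral_reflect_real[where f = f and a = 0 and b = t]
    Henstock_Kurzweil_Integration.integral_reflect_real[where f = f and a = t and b = 0]
  by (auto simp: sint_def)

lemma piecewise_cont_isCont_near:
  assumes "piecewise_cont f"
  shows "\<exists>d>0. \<forall>s. 0 < \<bar>s - x\<bar> \<and> \<bar>s - x\<bar> < d \<longrightarrow> isCont f s"
proof -
  define D where "D = {s \<in> {x - 1..x + 1}. \<not> isCont f s} - {x}"
  have "finite D" using assms unfolding piecewise_cont_def D_def by blast
  define d where "d = Min (insert 1 ((\<lambda>s. \<bar>s - x\<bar>) ` D))"
  have "d > 0" unfolding d_def using \<open>finite D\<close> by (subst Min_gr_iff) (auto simp: D_def)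
  moreover have "isCont f s" if "0 < \<bar>s - x\<bar>" "\<bar>s - x\<bar> < d" for s
  proof (rule ccontr)
    assume "\<not> isCont f s"
    moreover have "d \<le> 1" unfolding d_def using \<open>finite D\<close> by simp
    ultimately have "s \<in> D" using that by (auto simp: D_def)
    then have "d \<le> \<bar>s - x\<bar>" unfolding d_def using \<open>finite D\<close> by (intro Min_le) auto
    then show False using that by simp
  qed
  ultimately show ?thesis by blast
qed

definition norm_comparable_near_0 :: "('a::real_normed_vector \<Rightarrow> real) \<Rightarrow> bool" where
  "norm_comparable_near_0 f \<longleftrightarrow>
     (\<exists>d>0. \<exists>k K. 0 < k \<and> k \<le> K \<and> (\<forall>y. norm y < d \<longrightarrow> k * norm y \<le> f y \<and> f y \<le> K * norm y))"

lemma norm_comparable_near_0_sint: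
  assumes "piecewise_cont f"
    and "l > 0" "(f \<longlongrightarrow> l) (at_right 0)" and "l' < 0" "(f \<longlongrightarrow> l') (at_left 0)"
  shows "norm_comparable_near_0 (sint f)"
proof -
  define g where "g = (\<lambda>s. - f (- s))"
  obtain d where "d > 0" and cont: "\<And>s. 0 < \<bar>s\<bar> \<Longrightarrow> \<bar>s\<bar> < d \<Longrightarrow> isCont f s"
    using piecewise_cont_isCont_near[OF assms(1), of 0] by auto
  have "isCont g s" if "s \<in> {0<..<d}" for s
    using isCont_o2[OF continuous_minus[OF continuous_ident] cont[of "- s"]] that
    unfolding g_def by (auto intro: isCont_minus)
  moreover have "(g \<longlongrightarrow> - l') (at_right 0)"
    using assms(5) unfolding g_def filterlim_at_left_to_right by (auto intro: tendsto_minus)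
  ultimately obtain e2 where "e2 > 0"
    and neg: "\<And>t. 0 \<le> t \<Longrightarrow> t < e2 \<Longrightarrow> - l' / 2 * t \<le> sint g t \<and> sint g t \<le> 2 * - l' * t"
    using sint_bounds_right_of_0[OF \<open>d > 0\<close>] \<open>l' < 0\<close> by (metis neg_0_less_iff_less)
  obtain e1 where "e1 > 0"
    and pos: "\<And>t. 0 \<le> t \<Longrightarrow> t < e1 \<Longrightarrow> l / 2 * t \<le> sint f t \<and> sint f t \<le> 2 * l * t"
    using sint_bounds_right_of_0[OF \<open>d > 0\<close> _ assms(3,2)] cont by force
  define k where "k = min (l / 2) (- l' / 2)"
  define K where "K = max (2 * l) (- 2 * l')"
  have "k * \<bar>t\<bar> \<le> sint f t \<and> sint f t \<le> K * \<bar>t\<bar>" if "\<bar>t\<bar> < min e1 e2" for t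
  proof (cases "t \<ge> 0")
    case True
    have "k * t \<le> l / 2 * t" "2 * l * t \<le> K * t"
      using True by (intro mult_right_mono; simp add: k_def K_def)+
    then show ?thesis using pos[of t] True that by auto
  next
    case False
    have "k * - t \<le> - l' / 2 * - t" "2 * - l' * - t \<le> K * - t"
      using False by (intro mult_right_mono; simp add: k_def K_def)+
    moreover have "sint f t = sint g (- t)" unfolding g_def by (rule sint_reflect)
    ultimately show ?thesis using neg[of "- t"] False that by auto
  qed
  moreover have "0 < k" "k \<le> K" using assms(2,4) by (auto simp: k_def K_def)
  ultimately show ?thesis unfolding norm_comparable_near_0_def using \<open>e1 > 0\<close> \<open>e2 > 0\<close>
    by (intro exI[of _ "min e1 e2"]) auto
qed

lemma norm_comparable_near_0_W_fun:
  fixes \<gamma> :: "'p::finite \<Rightarrow> real"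
  assumes gam_pos: "\<forall>i. \<gamma> i > 0" and comp: "\<forall>i. norm_comparable_near_0 (sint (\<psi> i))"
  shows "norm_comparable_near_0 (W_fun \<gamma> \<psi>)"
proof -
  obtain d k K where "\<And>i. d i > 0" "\<And>i. 0 < k i" "\<And>i. k i \<le> K i"
    and bnd: "\<And>i t. \<bar>t\<bar> < d i \<Longrightarrow> k i * \<bar>t\<bar> \<le> sint (\<psi> i) t \<and> sint (\<psi> i) t \<le> K i * \<bar>t\<bar>"
    using comp unfolding norm_comparable_near_0_def real_norm_def by metis
  define dm where "dm = Min (range d)"
  define km where "km = Min (range (\<lambda>i. \<gamma> i * k i))"
  define KM where "KM = Max (range (\<lambda>i. \<gamma> i * K i))"
  have "dm > 0" unfolding dm_def using \<open>\<And>i. d i > 0\<close> by (subst Min_gr_iff) auto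
  have "km > 0" unfolding km_def using \<open>\<And>i. 0 < k i\<close> gam_pos by (subst Min_gr_iff) auto
  have km_le: "km \<le> \<gamma> i * k i" and KM_ge: "\<gamma> i * K i \<le> KM" and "dm \<le> d i" for i
    unfolding km_def KM_def dm_def by (auto intro: Min_le Max_ge)
  fix i0 :: 'p
  have "\<gamma> i0 * k i0 \<le> \<gamma> i0 * K i0"
    using gam_pos \<open>\<And>i. k i \<le> K i\<close> by (simp add: less_imp_le mult_left_mono)
  then have "km \<le> KM" using km_le[of i0] KM_ge[of i0] by linarith
  have "1 \<le> real CARD('p)" by (simp add: Suc_le_eq)
  then have "km \<le> KM * CARD('p)"
    using \<open>km \<le> KM\<close> \<open>km > 0\<close> by (simp add: mult_le_cancel_left1 order_trans)
  moreover have "2 * km * norm y \<le> W_fun \<gamma> \<psi> y \<and> W_fun \<gamma> \<psi> y \<le> 2 * (KM * CARD('p)) * norm y"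
    if "norm y < dm" for y
  proof -
    have y: "\<bar>y $ i\<bar> < d i" for i
      using component_le_norm_cart[of y i] that \<open>dm \<le> d i\<close> by linarith
    have "km * \<bar>y $ i\<bar> \<le> \<gamma> i * sint (\<psi> i) (y $ i)" for i
    proof -
      have "km * \<bar>y $ i\<bar> \<le> \<gamma> i * k i * \<bar>y $ i\<bar>" by (rule mult_right_mono[OF km_le]) simp
      also have "\<dots> \<le> \<gamma> i * sint (\<psi> i) (y $ i)"
        unfolding mult.assoc by (rule mult_left_mono) (use bnd[OF y] gam_pos in \<open>auto intro: less_imp_le\<close>)
      finally show ?thesis .
    qed
    moreover have "\<gamma> i * sint (\<psi> i) (y $ i) \<le> KM * \<bar>y $ i\<bar>" for i
    proof -
      have "\<gamma> i * sint (\<psi> i) (y $ i) \<le> \<gamma> i * K i * \<bar>y $ i\<bar>"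
        unfolding mult.assoc by (rule mult_left_mono) (use bnd[OF y] gam_pos in \<open>auto intro: less_imp_le\<close>)
      also have "\<dots> \<le> KM * \<bar>y $ i\<bar>" by (rule mult_right_mono[OF KM_ge]) simp
      finally show ?thesis .
    qed
    ultimately have "km * (\<Sum>i\<in>UNIV. \<bar>y $ i\<bar>) \<le> (\<Sum>i\<in>UNIV. \<gamma> i * sint (\<psi> i) (y $ i))"
      and "(\<Sum>i\<in>UNIV. \<gamma> i * sint (\<psi> i) (y $ i)) \<le> KM * (\<Sum>i\<in>UNIV. \<bar>y $ i\<bar>)"
      by (simp_all add: sum_distrib_left sum_mono)
    moreover have "km * norm y \<le> km * (\<Sum>i\<in>UNIV. \<bar>y $ i\<bar>)"
      using norm_le_l1_cart[of y] \<open>km > 0\<close> by simp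
    moreover have "KM * (\<Sum>i\<in>UNIV. \<bar>y $ i\<bar>) \<le> KM * (CARD('p) * norm y)"
      using sum_mono[of UNIV "\<lambda>i. \<bar>y $ i\<bar>" "\<lambda>_. norm y"] component_le_norm_cart[of y] \<open>km \<le> KM\<close> \<open>km > 0\<close>
      by (intro mult_left_mono) auto
    ultimately show ?thesis unfolding W_fun_def by (simp add: algebra_simps)
  qed
  ultimately show ?thesis
    unfolding norm_comparable_near_0_def using \<open>dm > 0\<close> \<open>km > 0\<close>
    by (intro exI[of _ dm] conjI exI[of _ "2 * km"] exI[of _ "2 * (KM * CARD('p))"]) auto
qed

lemma set_lie_gen_grad_F_kras:
  assumes "a \<in> set_lie (gen_grad C \<gamma> \<psi> x) (F_kras A B C \<psi> x)"
  obtains w where "w \<in> Kras_vec \<psi> (C *v x)"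
    and "a = 2 * (w \<bullet> ((diag_mat \<gamma> ** (C ** A)) *v x))
           - w \<bullet> ((diag_mat \<gamma> ** (C ** B) + transpose (C ** B) ** diag_mat \<gamma>) *v w)"
proof -
  define G where "G = diag_mat \<gamma>"
  obtain w where w: "w \<in> Kras_vec \<psi> (C *v x)"
    and "\<forall>v\<in>gen_grad C \<gamma> \<psi> x. v \<bullet> (A *v x - B *v w) = a"
    using assms unfolding set_lie_def F_kras_def by blast
  moreover have "2 *\<^sub>R (transpose C *v (G *v w)) \<in> gen_grad C \<gamma> \<psi> x"
    using w unfolding gen_grad_def G_def by blast
  ultimately have a: "a = 2 * ((transpose C *v (G *v w)) \<bullet> (A *v x - B *v w))" by force
  have "(transpose C *v (G *v w)) \<bullet> z = w \<bullet> ((G ** C) *v z)" for z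
    using inner_matrix_vector_transpose[of "G *v w" C z] inner_matrix_vector_transpose[of w G "C *v z"]
    by (simp add: G_def matrix_vector_mul_assoc inner_commute)
  then have "a = 2 * (w \<bullet> ((G ** (C ** A)) *v x)) - 2 * (w \<bullet> ((G ** (C ** B)) *v w))"
    using a by (simp add: matrix_vector_mult_diff_distrib inner_diff_right matrix_vector_mul_assoc
        matrix_mul_assoc)
  moreover have "w \<bullet> ((transpose (C ** B) ** G) *v w) = w \<bullet> ((G ** (C ** B)) *v w)"
    using inner_matrix_vector_transpose[of w "transpose (C ** B) ** G" w]
    by (simp add: matrix_transpose_mul G_def inner_commute)
  ultimately show thesis
    using that w by (simp add: G_def matrix_vector_mult_add_rdistrib inner_add_right)
qed

lemma Sup_set_lie_le:
  fixes A :: "real^'n^'n" and B :: "real^'p^'n" and C :: "real^'n^'p" and \<gamma> :: "'p::finite \<Rightarrow> real"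
  defines "l1 \<equiv> min_eig (diag_mat \<gamma> ** (C ** B) + transpose (C ** B) ** diag_mat \<gamma>)"
    and "l2 \<equiv> spec_norm (diag_mat \<gamma> ** (C ** A))"
  assumes "norm x \<le> \<mu>" and large: "\<forall>w \<in> Kras_vec \<psi> (C *v x). c \<le> norm w"
    and "0 \<le> l1" and "2 * \<mu> * l2 \<le> l1 * c"
  shows "Sup (ereal ` set_lie (gen_grad C \<gamma> \<psi> x) (F_kras A B C \<psi> x)) \<le> ereal (- c * (l1 * c - 2 * \<mu> * l2))"
proof (rule Sup_least, clarify)
  fix a assume "a \<in> set_lie (gen_grad C \<gamma> \<psi> x) (F_kras A B C \<psi> x)"
  then obtain w where "w \<in> Kras_vec \<psi> (C *v x)"
    and a: "a = 2 * (w \<bullet> ((diag_mat \<gamma> ** (C ** A)) *v x))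
           - w \<bullet> ((diag_mat \<gamma> ** (C ** B) + transpose (C ** B) ** diag_mat \<gamma>) *v w)"
    by (rule set_lie_gen_grad_F_kras)
  then have "c \<le> norm w" using large by blast
  have "norm ((diag_mat \<gamma> ** (C ** A)) *v x) \<le> l2 * \<mu>"
    using onorm[OF matrix_vector_mul_bounded_linear, of "diag_mat \<gamma> ** (C ** A)" x]
      onorm_pos_le[OF matrix_vector_mul_bounded_linear, of "diag_mat \<gamma> ** (C ** A)"] \<open>norm x \<le> \<mu>\<close>
    unfolding l2_def spec_norm_def by (meson mult_left_mono order_trans)
  then have "w \<bullet> ((diag_mat \<gamma> ** (C ** A)) *v x) \<le> norm w * (l2 * \<mu>)"
    using norm_cauchy_schwarz[of w] mult_left_mono[OF _ norm_ge_zero] by (meson order_trans)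
  then have "a \<le> 2 * norm w * (l2 * \<mu>) - l1 * (norm w)\<^sup>2"
    using a min_eig_symmetric(2)[OF symmetric_diag_mat_mult_plus_transpose, of \<gamma> "C ** B" w]
    by (simp add: l1_def power2_norm_eq_inner)
  also have "\<dots> \<le> - c * (l1 * c - 2 * \<mu> * l2)"
  proof -
    have "0 \<le> (norm w - c) * (l1 * (norm w + c) - 2 * l2 * \<mu>)"
      using \<open>c \<le> norm w\<close> \<open>2 * \<mu> * l2 \<le> l1 * c\<close> mult_nonneg_nonneg[OF \<open>0 \<le> l1\<close> norm_ge_zero[of w]]
      by (intro mult_nonneg_nonneg) (auto simp: algebra_simps)
    then show ?thesis by (simp add: algebra_simps power2_eq_square)
  qed
  finally show "ereal a \<le> ereal (- c * (l1 * c - 2 * \<mu> * l2))" by simp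
qed

lemma obtain_small_positive:
  fixes \<nu> \<delta> \<epsilon> a b :: real
  assumes "0 < \<nu>" "0 < \<delta>" "0 < \<epsilon>"
  obtains \<mu> where "0 < \<mu>" "\<mu> < \<nu>" "a * \<mu> < \<delta>" "b * \<mu> < \<epsilon>"
proof -
  have lim: "((\<lambda>\<mu>. r * \<mu>) \<longlongrightarrow> 0) (at_right 0)" for r :: real
    by (auto intro!: tendsto_eq_intros)
  have "\<forall>\<^sub>F \<mu> in at_right (0::real). 0 < \<mu>" by (rule eventually_at_right_less)
  moreover have "\<forall>\<^sub>F \<mu> in at_right 0. \<mu> < \<nu>" by (rule order_tendstoD(2)[OF tendsto_ident_at \<open>0 < \<nu>\<close>])
  moreover have "\<forall>\<^sub>F \<mu> in at_right 0. a * \<mu> < \<delta>" by (rule order_tendstoD(2)[OF lim \<open>0 < \<delta>\<close>])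
  moreover have "\<forall>\<^sub>F \<mu> in at_right 0. b * \<mu> < \<epsilon>" by (rule order_tendstoD(2)[OF lim \<open>0 < \<epsilon>\<close>])
  ultimately have "\<forall>\<^sub>F \<mu> in at_right 0. 0 < \<mu> \<and> \<mu> < \<nu> \<and> a * \<mu> < \<delta> \<and> b * \<mu> < \<epsilon>"
    by eventually_elim blast
  then show thesis using that eventually_happens'[OF trivial_limit_at_right_real] by blast
qed

lemma class_K_inf_linear: "(a::real) > 0 \<Longrightarrow> class_K_inf (\<lambda>r. a * r)"
  unfolding class_K_inf_def
  by (auto intro!: continuous_intros strict_mono_onI filterlim_tendsto_pos_mult_at_top filterlim_ident)

theorem proposition2:
  fixes A :: "real^'n^'n" and B :: "real^'p^'n" and C :: "real^'n^'p"
    and \<psi> :: "'p \<Rightarrow> real \<Rightarrow> real" and \<gamma> :: "'p \<Rightarrow> real" and \<nu> c :: real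
  assumes pwc: "\<forall>i. piecewise_cont (\<psi> i)"
    and sector: "\<forall>i. (\<exists>\<zeta>>0. \<forall>s. \<psi> i s * (\<psi> i s - \<zeta> * s) \<le> 0) \<or> (\<forall>s. \<psi> i s * s \<ge> 0)"
    and lim_pos: "\<forall>i. \<exists>l>0. (\<psi> i \<longlongrightarrow> l) (at_right 0)"
    and lim_neg: "\<forall>i. \<exists>l<0. (\<psi> i \<longlongrightarrow> l) (at_left 0)"
    and gam_pos: "\<forall>i. \<gamma> i > 0"
    and pd: "pos_def (diag_mat \<gamma> ** (C ** B) + transpose (C ** B) ** diag_mat \<gamma>)"
    and \<nu>_pos: "\<nu> > 0" and c_pos: "c > 0"
    and lower: "\<forall>y. 0 < norm y \<and> norm y \<le> \<nu> \<longrightarrow> (\<forall>w \<in> Kras_vec \<psi> y. norm (- w) \<ge> c)"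
  shows "let l1 = min_eig (diag_mat \<gamma> ** (C ** B) + transpose (C ** B) ** diag_mat \<gamma>);
             l2 = spec_norm (diag_mat \<gamma> ** (C ** A)) in
         \<exists>\<mu>. 0 < \<mu> \<and> \<mu> \<le> \<nu> \<and> l1 * (c - 2 * \<mu> * l2 / l1) > 0 \<and>
           (\<exists>\<alpha>4 \<alpha>5. class_K_inf \<alpha>4 \<and> class_K_inf \<alpha>5 \<and>
             (\<forall>x. norm x \<le> \<mu> \<longrightarrow>
                \<alpha>4 (norm (C *v x)) \<le> W_fun \<gamma> \<psi> (C *v x) \<and> W_fun \<gamma> \<psi> (C *v x) \<le> \<alpha>5 (norm (C *v x))) \<and>
             (\<forall>x. norm x \<le> \<mu> \<and> C *v x \<noteq> 0 \<longrightarrow>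
                Sup (ereal ` set_lie (gen_grad C \<gamma> \<psi> x) (F_kras A B C \<psi> x))
                  \<le> ereal (- c * (l1 * (c - 2 * \<mu> * l2 / l1)))))"
proof -
  define l1 where "l1 = min_eig (diag_mat \<gamma> ** (C ** B) + transpose (C ** B) ** diag_mat \<gamma>)"
  define l2 where "l2 = spec_norm (diag_mat \<gamma> ** (C ** A))"
  have "l1 > 0" unfolding l1_def by (rule min_eig_pos[OF symmetric_diag_mat_mult_plus_transpose pd])
  have "\<forall>i. norm_comparable_near_0 (sint (\<psi> i))"
    using norm_comparable_near_0_sint pwc lim_pos lim_neg by metis
  then obtain \<delta> k K where "\<delta> > 0" "0 < k" "k \<le> K"
    and W: "\<And>y. norm y < \<delta> \<Longrightarrow> k * norm y \<le> W_fun \<gamma> \<psi> y \<and> W_fun \<gamma> \<psi> y \<le> K * norm y"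
    using norm_comparable_near_0_W_fun[OF gam_pos] unfolding norm_comparable_near_0_def by metis
  obtain \<mu> where \<mu>: "0 < \<mu>" "\<mu> < \<nu>" "onorm ((*v) C) * \<mu> < min \<delta> \<nu>" "(2 * l2) * \<mu> < l1 * c"
    using obtain_small_positive[of \<nu> "min \<delta> \<nu>" "l1 * c"] \<nu>_pos \<open>\<delta> > 0\<close> \<open>l1 > 0\<close> c_pos by auto
  have Cx: "norm (C *v x) < \<delta> \<and> norm (C *v x) \<le> \<nu>" if "norm x \<le> \<mu>" for x
  proof -
    have "norm (C *v x) \<le> onorm ((*v) C) * \<mu>"
      using onorm[OF matrix_vector_mul_bounded_linear, of C x] mult_left_mono[OF that]
        onorm_pos_le[OF matrix_vector_mul_bounded_linear, of C]
      by (meson order_trans)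
    then show ?thesis using \<mu>(3) by linarith
  qed
  have "Sup (ereal ` set_lie (gen_grad C \<gamma> \<psi> x) (F_kras A B C \<psi> x)) \<le> ereal (- c * (l1 * c - 2 * \<mu> * l2))"
    if "norm x \<le> \<mu>" "C *v x \<noteq> 0" for x
    unfolding l1_def l2_def
  proof (rule Sup_set_lie_le)
    show "\<forall>w\<in>Kras_vec \<psi> (C *v x). c \<le> norm w" using lower Cx[OF that(1)] that(2) by auto
  qed (use that \<open>l1 > 0\<close> \<mu>(4) in \<open>auto simp: l1_def l2_def mult_ac\<close>)
  moreover have "l1 * (c - 2 * \<mu> * l2 / l1) = l1 * c - 2 * \<mu> * l2" using \<open>l1 > 0\<close> by (simp add: field_simps)
  ultimately show ?thesis unfolding Let_def l1_def[symmetric] l2_def[symmetric] using \<mu> W Cx \<open>0 < k\<close> \<open>k \<le> K\<close>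
    by (intro exI[of _ \<mu>] conjI exI[of _ "\<lambda>r. k * r"] exI[of _ "\<lambda>r. K * r"] class_K_inf_linear)
      (auto simp: mult_ac)
qed

end
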